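(* Let $g:[a,b]\to\mathbb R$ be increasing, continuous at $a$ and at $b$, and left-continuous at every point of $(a,b)$. Let $f:[a,b]\to\mathbb R$ be $g$-Lipschitz continuous with Lipschitz constant $H$. If $g^C$ is Lipschitz continuous with Lipschitz constant $H$, then $f^C$ is Lipschitz continuous with Lipschitz constant $H^2$.
   Context: For a function $\varphi:[a,b]\to\mathbb R$ having right limits, $\Delta^+\varphi(t)=\varphi(t^+)-\varphi(t)$, its jump part is $\varphi^B(t)=\sum_{s\in[a,t)}\Delta^+\varphi(s)$ and its continuous part is $\varphi^C=\varphi-\varphi^B$. $f$ is $g$-Lipschitz continuous with constant $H$ if $|f(t)-f(s)|\le H|g(t)-g(s)|$ for all $t,s\in[a,b]$. *)

theory Defs
  imports "HOL-Analysis.Analysis"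
begin

definition right_jump :: "(real \<Rightarrow> real) \<Rightarrow> real \<Rightarrow> real" where
  "right_jump phi t = Lim (at_right t) phi - phi t"

definition jump_part :: "real \<Rightarrow> (real \<Rightarrow> real) \<Rightarrow> real \<Rightarrow> real" where
  "jump_part a phi t = infsum (right_jump phi) {a..<t}"

definition cont_part :: "real \<Rightarrow> (real \<Rightarrow> real) \<Rightarrow> real \<Rightarrow> real" where
  "cont_part a phi t = phi t - jump_part a phi t"

definition g_lipschitz_on :: "real \<Rightarrow> real \<Rightarrow> (real \<Rightarrow> real) \<Rightarrow> real \<Rightarrow> (real \<Rightarrow> real) \<Rightarrow> bool" where
  "g_lipschitz_on a b g H f \<longleftrightarrow>
     (\<forall>t\<in>{a..b}. \<forall>s\<in>{a..b}. \<bar>f t - f s\<bar> \<le> H * \<bar>g t - g s\<bar>)"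

end

theory Submission
  imports Defs
begin

text \<open>The hypothesis on f says exactly that both H g - f and H g + f are increasing.
  For an increasing function the sum of its right jumps over [s,t) is at most its increment, so
  its continuous part is increasing as well; and passing to the continuous part is linear. Hence
  the increments of f^C = H g^C - (H g - f)^C = (H g + f)^C - H g^C lie between -H and H times
  those of g^C, which are at most H (t - s).\<close>

lemma mono_on_tendsto_at_right:
  fixes phi :: "real \<Rightarrow> real"
  assumes m: "mono_on {a..b} phi" and u: "a \<le> u" "u < b"
  obtains L where "(phi \<longlongrightarrow> L) (at_right u)" "phi u \<le> L" "\<And>v. v \<in> {u<..b} \<Longrightarrow> L \<le> phi v"
proof -
  have mono: "\<And>x y. x \<in> {a..b} \<Longrightarrow> y \<in> {a..b} \<Longrightarrow> u < x \<Longrightarrow> x \<le> y \<Longrightarrow> phi x \<le> phi y"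
    using m by (auto simp: mono_on_def)
  have bnd: "\<And>x. x \<in> {a..b} \<Longrightarrow> u < x \<Longrightarrow> phi u \<le> phi x"
    using m u by (auto simp: mono_on_def)
  define L where "L = Inf (phi ` ({u<..} \<inter> {a..b}))"
  have "(phi \<longlongrightarrow> L) (at u within ({u<..} \<inter> {a..b}))"
    unfolding L_def by (rule Lim_right_bound[OF mono bnd])
  moreover have "at u within ({u<..} \<inter> {a..b}) = at_right u"
    by (rule at_within_nhd[where S="{..<b}"]) (use u in auto)
  ultimately have lim: "(phi \<longlongrightarrow> L) (at_right u)" by simp
  have "\<forall>\<^sub>F x in at_right u. x \<in> {u<..<b}"
    using u by (simp add: eventually_at_right_field) (metis dist_real_def)
  then have "\<forall>\<^sub>F x in at_right u. phi u \<le> phi x"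
    by eventually_elim (use bnd u in auto)
  then have "phi u \<le> L"
    by (rule tendsto_lowerbound[OF lim]) simp
  moreover have "L \<le> phi v" if v: "v \<in> {u<..b}" for v
  proof -
    have "\<forall>\<^sub>F x in at_right u. x \<in> {u<..<v}"
      using v by (simp add: eventually_at_right_field) (metis dist_real_def)
    then have "\<forall>\<^sub>F x in at_right u. phi x \<le> phi v"
      by eventually_elim (use mono u v in auto)
    then show ?thesis
      by (rule tendsto_upperbound[OF lim]) simp
  qed
  ultimately show ?thesis using lim that by blast
qed

lemma mono_on_right_jump:
  fixes phi :: "real \<Rightarrow> real"
  assumes m: "mono_on {a..b} phi" and u: "a \<le> u" "u < b"
  shows "(phi \<longlongrightarrow> phi u + right_jump phi u) (at_right u)"
    and "0 \<le> right_jump phi u"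
    and "\<And>v. v \<in> {u<..b} \<Longrightarrow> phi u + right_jump phi u \<le> phi v"
proof -
  obtain L where L: "(phi \<longlongrightarrow> L) (at_right u)" "phi u \<le> L" "\<And>v. v \<in> {u<..b} \<Longrightarrow> L \<le> phi v"
    using mono_on_tendsto_at_right[OF m u] by blast
  have "phi u + right_jump phi u = L"
    using L(1) by (simp add: right_jump_def tendsto_Lim)
  then show "(phi \<longlongrightarrow> phi u + right_jump phi u) (at_right u)" "0 \<le> right_jump phi u"
    "\<And>v. v \<in> {u<..b} \<Longrightarrow> phi u + right_jump phi u \<le> phi v"
    using L by simp_all
qed

lemma mono_on_sum_right_jump_le:
  fixes phi :: "real \<Rightarrow> real"
  assumes m: "mono_on {a..b} phi" and "finite F" and s: "a \<le> s"
  shows "F \<subseteq> {s..<t} \<Longrightarrow> s \<le> t \<Longrightarrow> t \<le> b \<Longrightarrow> sum (right_jump phi) F \<le> phi t - phi s"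
  using \<open>finite F\<close>
proof (induction arbitrary: t rule: finite_linorder_max_induct)
  case empty
  then show ?case using m s by (auto simp: mono_on_def)
next
  case (insert c A)
  then have "A \<subseteq> {s..<c}" "s \<le> c" "a \<le> c" "c < b" "c < t"
    using s by auto
  then have "sum (right_jump phi) A \<le> phi c - phi s"
    using insert.IH by auto
  moreover have "phi c + right_jump phi c \<le> phi t"
    using mono_on_right_jump(3)[OF m \<open>a \<le> c\<close> \<open>c < b\<close>] \<open>c < t\<close> insert.prems by auto
  moreover have "c \<notin> A" using insert.hyps(2) by auto
  ultimately show ?case using insert.hyps(1) by simp
qed

lemma mono_on_right_jump_summable:
  fixes phi :: "real \<Rightarrow> real"
  assumes m: "mono_on {a..b} phi" and st: "a \<le> s" "s \<le> t" "t \<le> b"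
  shows "right_jump phi summable_on {s..<t}"
    and "infsum (right_jump phi) {s..<t} \<le> phi t - phi s"
proof -
  have nonneg: "\<And>x. x \<in> {s..<t} \<Longrightarrow> 0 \<le> right_jump phi x"
    using mono_on_right_jump(2)[OF m] st by auto
  have bound: "\<And>F. finite F \<Longrightarrow> F \<subseteq> {s..<t} \<Longrightarrow> sum (right_jump phi) F \<le> phi t - phi s"
    using mono_on_sum_right_jump_le[OF m _ st(1)] st by blast
  show sum: "right_jump phi summable_on {s..<t}"
    by (rule nonneg_bdd_above_summable_on[OF nonneg]) (use bound in \<open>auto intro!: bdd_aboveI\<close>)
  show "infsum (right_jump phi) {s..<t} \<le> phi t - phi s"
    by (rule infsum_le_finite_sums[OF sum bound])
qed

lemma cont_part_diff:
  fixes phi :: "real \<Rightarrow> real"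
  assumes "right_jump phi summable_on {a..<t}" and "a \<le> s" "s \<le> t"
  shows "cont_part a phi t - cont_part a phi s = phi t - phi s - infsum (right_jump phi) {s..<t}"
proof -
  have "right_jump phi summable_on {a..<s}" "right_jump phi summable_on {s..<t}"
    by (rule summable_on_subset[OF assms(1)]; use assms in auto)+
  then have "infsum (right_jump phi) ({a..<s} \<union> {s..<t})
      = infsum (right_jump phi) {a..<s} + infsum (right_jump phi) {s..<t}"
    by (rule infsum_Un_disjoint) auto
  moreover have "{a..<s} \<union> {s..<t} = {a..<t}" using assms by auto
  ultimately show ?thesis by (simp add: cont_part_def jump_part_def)
qed

lemma mono_on_cont_part:
  fixes phi :: "real \<Rightarrow> real"
  assumes m: "mono_on {a..b} phi"
  shows "mono_on {a..b} (cont_part a phi)"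
proof (rule mono_onI)
  fix s t assume st: "s \<in> {a..b}" "t \<in> {a..b}" "s \<le> t"
  then have "cont_part a phi t - cont_part a phi s = phi t - phi s - infsum (right_jump phi) {s..<t}"
    using cont_part_diff mono_on_right_jump_summable(1)[OF m] by auto
  moreover have "infsum (right_jump phi) {s..<t} \<le> phi t - phi s"
    using mono_on_right_jump_summable(2)[OF m] st by auto
  ultimately show "cont_part a phi s \<le> cont_part a phi t" by simp
qed

lemma right_jump_lincomb:
  fixes phi psi :: "real \<Rightarrow> real"
  assumes "(phi \<longlongrightarrow> L) (at_right u)" and "(psi \<longlongrightarrow> M) (at_right u)"
  shows "right_jump (\<lambda>x. c * phi x + d * psi x) u = c * right_jump phi u + d * right_jump psi u"
proof -
  have "((\<lambda>x. c * phi x + d * psi x) \<longlongrightarrow> c * L + d * M) (at_right u)"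
    by (intro tendsto_intros assms)
  with assms show ?thesis
    by (simp add: right_jump_def tendsto_Lim algebra_simps)
qed

lemma cont_part_lincomb:
  fixes phi psi :: "real \<Rightarrow> real"
  assumes mphi: "mono_on {a..b} phi" and mpsi: "mono_on {a..b} psi" and t: "t \<in> {a..b}"
  shows "cont_part a (\<lambda>x. c * phi x + d * psi x) t = c * cont_part a phi t + d * cont_part a psi t"
proof -
  have "right_jump (\<lambda>x. c * phi x + d * psi x) u = c * right_jump phi u + d * right_jump psi u"
    if "u \<in> {a..<t}" for u
    using that t by (auto intro!: right_jump_lincomb mono_on_right_jump(1)[OF mphi] mono_on_right_jump(1)[OF mpsi])
  then have "jump_part a (\<lambda>x. c * phi x + d * psi x) t
      = infsum (\<lambda>u. c * right_jump phi u + d * right_jump psi u) {a..<t}"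
    unfolding jump_part_def by (rule infsum_cong)
  also have "\<dots> = c * jump_part a phi t + d * jump_part a psi t"
    using mono_on_right_jump_summable(1)[OF mphi, of a t] mono_on_right_jump_summable(1)[OF mpsi, of a t] t
    by (subst infsum_add) (auto simp: summable_on_cmult_right infsum_cmult_right' jump_part_def)
  finally show ?thesis by (simp add: cont_part_def algebra_simps)
qed

lemma g_lipschitz_on_imp_mono_on:
  assumes "mono_on {a..b} g" and "g_lipschitz_on a b g H f"
  shows "mono_on {a..b} (\<lambda>x. H * g x - f x)" and "mono_on {a..b} (\<lambda>x. H * g x + f x)"
proof -
  have "\<bar>f y - f x\<bar> \<le> H * (g y - g x)" if "x \<in> {a..b}" "y \<in> {a..b}" "x \<le> y" for x y
  proof -
    have "g x \<le> g y" using assms(1) that by (auto simp: mono_on_def)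
    moreover have "\<bar>f y - f x\<bar> \<le> H * \<bar>g y - g x\<bar>"
      using assms(2) that by (auto simp: g_lipschitz_on_def)
    ultimately show ?thesis by simp
  qed
  note incr = this
  show "mono_on {a..b} (\<lambda>x. H * g x - f x)" "mono_on {a..b} (\<lambda>x. H * g x + f x)"
    by (rule mono_onI, drule (2) incr, simp add: abs_le_iff algebra_simps)+
qed

lemma lipschitz_on_real_ordered_incrementsI:
  fixes F :: "real \<Rightarrow> real"
  assumes "0 \<le> L" and "\<And>s t. s \<in> S \<Longrightarrow> t \<in> S \<Longrightarrow> s \<le> t \<Longrightarrow> \<bar>F t - F s\<bar> \<le> L * (t - s)"
  shows "L-lipschitz_on S F"
proof (rule lipschitz_onI)
  fix x y assume "x \<in> S" "y \<in> S"
  with assms(2)[of x y] assms(2)[of y x] show "dist (F x) (F y) \<le> L * dist x y"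
    by (cases "x \<le> y") (auto simp: dist_real_def abs_minus_commute)
qed fact

theorem mainTheorem6:
  fixes f g :: "real \<Rightarrow> real" and a b H :: real
  assumes "mono_on {a..b} g"
    and "continuous (at a within {a..b}) g"
    and "continuous (at b within {a..b}) g"
    and "\<And>t. t \<in> {a<..<b} \<Longrightarrow> continuous (at_left t) g"
    and "g_lipschitz_on a b g H f"
    and "H-lipschitz_on {a..b} (cont_part a g)"
  shows "(H\<^sup>2)-lipschitz_on {a..b} (cont_part a f)"
proof (rule lipschitz_on_real_ordered_incrementsI)
  define h k where "h x = H * g x - f x" and "k x = H * g x + f x" for x
  have mh: "mono_on {a..b} h" and mk: "mono_on {a..b} k"
    unfolding h_def k_def by (fact g_lipschitz_on_imp_mono_on[OF assms(1,5)])+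
  have H: "0 \<le> H" using assms(6) by (rule lipschitz_on_nonneg)
  then show "0 \<le> H\<^sup>2" by simp
  fix s t assume st: "s \<in> {a..b}" "t \<in> {a..b}" "s \<le> t"
  have cf: "cont_part a f x = H * cont_part a g x - cont_part a h x"
      "cont_part a f x = cont_part a k x - H * cont_part a g x" if "x \<in> {a..b}" for x
    using cont_part_lincomb[OF assms(1) mh that, of H "-1"] cont_part_lincomb[OF assms(1) mk that, of "-H" 1]
    by (simp_all add: h_def k_def)
  have "cont_part a h s \<le> cont_part a h t" "cont_part a k s \<le> cont_part a k t"
    using mono_on_cont_part[OF mh] mono_on_cont_part[OF mk] st by (auto simp: mono_on_def)
  with st have "\<bar>cont_part a f t - cont_part a f s\<bar> \<le> H * (cont_part a g t - cont_part a g s)"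
    using cf[of s] cf[of t] by (simp add: abs_le_iff algebra_simps)
  also have "\<dots> \<le> H * (H * (t - s))"
    using lipschitz_onD[OF assms(6) st(2,1)] st H by (intro mult_left_mono) (auto simp: dist_real_def)
  finally show "\<bar>cont_part a f t - cont_part a f s\<bar> \<le> H\<^sup>2 * (t - s)"
    by (simp add: power2_eq_square)
qed

end
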